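(* Let $\mathcal{S}=\{A_1,\dots,A_p\}\subseteq M_m$ ($p\ge1$), let $\langle\mathcal{S}\rangle_0$ be the unital subalgebra of $M_m$ generated by the $A_i$ and $\langle\mathcal{S}\rangle_1$ the (not necessarily unital) subalgebra generated by the $A_i$. Let $\tau(X)=\sum_{i=1}^pA_i^*XA_i$ on $M_m$. Let $(a_n)_{n\ge0}$ be strictly positive scalars such that $\sum_{n\ge0}a_n\tau^n$ converges in norm, and put $\sigma_0=\sum_{n=0}^\infty a_n\tau^n$, $\sigma_1=\sum_{n=1}^\infty a_n\tau^n$ (with $\tau^0$ the identity map). Then for $j=0,1$ the coefficient space of $\sigma_j$ equals $\langle\mathcal{S}\rangle_j$. Consequently, $\dim\langle\mathcal{S}\rangle_j$ equals the Choi rank of $\sigma_j$, and $A\in\langle\mathcal{S}\rangle_j$ if and only if there exists a scalar $q>0$ such that $\sigma_j-q\alpha_A$ is completely positive.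
   Context: Every completely positive (CP) map $\sigma$ on $M_m$ has a Choi-Kraus decomposition $\sigma(X)=\sum_{k=1}^rC_k^*XC_k$; the span of the $C_k$ does not depend on the decomposition and is called the (Choi-Kraus) coefficient space $\mathcal{M}_\sigma$ of $\sigma$; its dimension is the Choi rank of $\sigma$. For $A\in M_m$, $\alpha_A(X)=A^*XA$. *)

theory Defs
  imports "HOL-Analysis.Analysis"
begin

type_synonym 'm cmat = "complex^'m^'m"

definition cscale :: "complex \<Rightarrow> ('m::finite) cmat \<Rightarrow> ('m::finite) cmat" where
  "cscale c A = (\<chi> i j. c * A$i$j)"

definition adj :: "('m::finite) cmat \<Rightarrow> ('m::finite) cmat" where
  "adj A = (\<chi> i j. cnj (A$j$i))"

definition alpha :: "('m::finite) cmat \<Rightarrow> ('m::finite) cmat \<Rightarrow> ('m::finite) cmat" where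
  "alpha A X = adj A ** X ** A"

definition tau :: "('m::finite) cmat list \<Rightarrow> ('m::finite) cmat \<Rightarrow> ('m::finite) cmat" where
  "tau As X = sum_list (map (\<lambda>A. adj A ** X ** A) As)"

definition cinner :: "complex^('m::finite) \<Rightarrow> complex^'m \<Rightarrow> complex" where
  "cinner u w = (\<Sum>l\<in>UNIV. cnj (u$l) * w$l)"

text \<open>A k x k block matrix with blocks in M_m (blocks B i j, i,j<k), i.e. an element of
  M_k(M_m) = M_{km}, is positive semidefinite iff its quadratic form v^* B v is real and
  nonnegative for all v in C^{km}.\<close>
definition psd_block :: "nat \<Rightarrow> (nat \<Rightarrow> nat \<Rightarrow> ('m::finite) cmat) \<Rightarrow> bool" where
  "psd_block k B \<longleftrightarrow> (\<forall>v :: nat \<Rightarrow> complex^'m.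
      let q = (\<Sum>i<k. \<Sum>j<k. cinner (v i) (B i j *v v j)) in Im q = 0 \<and> Re q \<ge> 0)"

text \<open>Complete positivity: id_k \<otimes> phi is positive for every k.\<close>
definition completely_positive :: "(('m::finite) cmat \<Rightarrow> ('m::finite) cmat) \<Rightarrow> bool" where
  "completely_positive \<phi> \<longleftrightarrow>
     (\<forall>k B. psd_block k B \<longrightarrow> psd_block k (\<lambda>i j. \<phi> (B i j)))"

definition kraus_decomp :: "(('m::finite) cmat \<Rightarrow> ('m::finite) cmat) \<Rightarrow> ('m::finite) cmat list \<Rightarrow> bool" where
  "kraus_decomp \<phi> Cs \<longleftrightarrow> (\<forall>X. \<phi> X = sum_list (map (\<lambda>C. adj C ** X ** C) Cs))"

text \<open>Coefficient space: complex span of the Kraus coefficients of a decomposition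
  (independent of the chosen decomposition).\<close>
definition coeff_space :: "(('m::finite) cmat \<Rightarrow> ('m::finite) cmat) \<Rightarrow> ('m::finite) cmat set" where
  "coeff_space \<phi> = module.span cscale (set (SOME Cs. kraus_decomp \<phi> Cs))"

definition choi_rank :: "(('m::finite) cmat \<Rightarrow> ('m::finite) cmat) \<Rightarrow> nat" where
  "choi_rank \<phi> = vector_space.dim cscale (coeff_space \<phi>)"

definition is_subalg :: "('m::finite) cmat set \<Rightarrow> bool" where
  "is_subalg B \<longleftrightarrow> 0 \<in> B \<and> (\<forall>x\<in>B. \<forall>y\<in>B. x + y \<in> B \<and> x ** y \<in> B)
      \<and> (\<forall>c. \<forall>x\<in>B. cscale c x \<in> B)"

text \<open>Subalgebra generated by S (<S>_1) and unital subalgebra generated by S (<S>_0).\<close>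
definition gen_alg :: "('m::finite) cmat set \<Rightarrow> ('m::finite) cmat set" where
  "gen_alg S = \<Inter>{B. is_subalg B \<and> S \<subseteq> B}"

definition gen_ualg :: "('m::finite) cmat set \<Rightarrow> ('m::finite) cmat set" where
  "gen_ualg S = \<Inter>{B. is_subalg B \<and> S \<subseteq> B \<and> mat 1 \<in> B}"

end

theory Submission
  imports Defs
begin

text \<open>Since \<open>tau As\<close> is the Kraus map with coefficients \<open>As\<close>, its \<open>n\<close>-th power is the Kraus map
  whose coefficients are the products of \<open>n\<close> of the \<open>A\<^sub>i\<close>, and \<open>\<sigma>\<^sub>j\<close> is a convergent positive
  combination of these.  The Choi form \<open>Y \<mapsto> \<Sum>\<^sub>n a\<^sub>n \<Sum>\<^sub>C |\<langle>Y, C\<rangle>|\<^sup>2\<close> of \<open>\<sigma>\<^sub>j\<close> is therefore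
  nonnegative, so \<open>\<sigma>\<^sub>j\<close> has a Kraus decomposition (Choi's theorem), and it vanishes exactly on the
  annihilator of the span of all these products, which is \<open>\<langle>S\<rangle>\<^sub>j\<close>.  For any Kraus map the
  coefficient span is the annihilator of the zero set of its Choi form, so the coefficient space
  of \<open>\<sigma>\<^sub>j\<close> is \<open>\<langle>S\<rangle>\<^sub>j\<close>.  Finally \<open>\<sigma> - q \<alpha>\<^sub>A\<close> is completely positive iff the Choi form of \<open>\<sigma>\<close>
  dominates \<open>q |\<langle>Y, A\<rangle>|\<^sup>2\<close>, which for some \<open>q > 0\<close> happens iff \<open>A\<close> lies in the coefficient span.\<close>

lemma cscale_nth [simp]: "cscale c A $ i $ j = c * A $ i $ j"
  by (simp add: cscale_def)

lemma adj_nth [simp]: "adj A $ i $ j = cnj (A $ j $ i)"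
  by (simp add: adj_def)

interpretation cmat: vector_space "cscale :: complex \<Rightarrow> ('m::finite) cmat \<Rightarrow> _"
  by unfold_locales (simp_all add: vec_eq_iff algebra_simps)

lemma matrix_mult_nth: "(A ** B) $ i $ j = (\<Sum>k\<in>UNIV. A $ i $ k * B $ k $ j)"
  by (simp add: matrix_matrix_mult_def)

lemma matrix_add_rdistrib: "(A + B) ** C = A ** C + B ** (C :: 'a::semiring_1^'n^'m)"
  by (simp add: vec_eq_iff matrix_mult_nth sum.distrib algebra_simps)

lemma adj_matrix_mult: "adj (A ** B) = adj B ** adj (A :: ('m::finite) cmat)"
  by (simp add: vec_eq_iff matrix_mult_nth mult.commute)

lemma adj_mat_1 [simp]: "adj (mat 1 :: ('m::finite) cmat) = mat 1"
  by (simp add: vec_eq_iff mat_def)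

lemma cscale_matrix_mult_left: "cscale c A ** B = cscale c (A ** (B :: ('m::finite) cmat))"
  by (simp add: vec_eq_iff matrix_mult_nth sum_distrib_left mult.assoc)

lemma cscale_matrix_mult_right: "A ** cscale c B = cscale c (A ** (B :: ('m::finite) cmat))"
  by (simp add: vec_eq_iff matrix_mult_nth sum_distrib_left algebra_simps)

lemma scaleR_cmat_nth: "(r *\<^sub>R (A :: ('m::finite) cmat)) $ i $ j = of_real r * A $ i $ j"
  using scaleR_conv_of_real[of r "A $ i $ j"] by simp

lemma scaleR_eq_cscale: "r *\<^sub>R (A :: ('m::finite) cmat) = cscale (of_real r) A"
  by (simp add: vec_eq_iff scaleR_cmat_nth del: vector_scaleR_component)

lemma sum_list_cmat_nth: "sum_list (map f xs) $ i $ j = (\<Sum>x\<leftarrow>xs. f x $ i $ j)"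
  by (induction xs) auto

lemma sum_list_matrix_mult_left:
  "sum_list (map f xs) ** (M :: ('m::finite) cmat) = (\<Sum>x\<leftarrow>xs. f x ** M)"
  by (induction xs) (simp_all add: matrix_add_rdistrib)

lemma sum_list_matrix_mult_right:
  "(M :: ('m::finite) cmat) ** sum_list (map f xs) = (\<Sum>x\<leftarrow>xs. M ** f x)"
  by (induction xs) (simp_all add: matrix_add_ldistrib)

text \<open>\<open>tau Cs\<close> is the general Kraus map with coefficients \<open>Cs\<close>, not only the map of the theorem.\<close>

lemma kraus_decomp_iff_tau: "kraus_decomp \<phi> Cs \<longleftrightarrow> \<phi> = tau Cs"
  by (simp add: kraus_decomp_def tau_def fun_eq_iff)

lemma alpha_eq_tau: "alpha A = tau [A]"
  by (simp add: fun_eq_iff alpha_def tau_def)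

lemma tau_Cons: "tau (C # Cs) X = adj C ** X ** C + tau Cs X"
  by (simp add: tau_def)

lemma tau_append: "tau (Cs @ Ds) X = tau Cs X + tau Ds X"
  by (simp add: tau_def)

lemma adj_mult_mult_nth:
  "(adj C ** X ** C) $ b $ d = (\<Sum>c\<in>UNIV. \<Sum>a\<in>UNIV. cnj (C $ a $ b) * X $ a $ c * C $ c $ d)"
  by (simp add: matrix_mult_nth sum_distrib_right)

lemma bounded_linear_tau: "bounded_linear (tau Cs)"
proof -
  have "linear (tau Cs)"
    by (rule linearI)
      (simp_all add: vec_eq_iff tau_def sum_list_cmat_nth adj_mult_mult_nth sum_list_addf
        sum.distrib algebra_simps scaleR_cmat_nth sum_distrib_left
        flip: sum_list_const_mult del: vector_scaleR_component)
  then show ?thesis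
    by (simp add: linear_conv_bounded_linear)
qed

lemma tau_tau: "tau As (tau Bs X) = tau (concat (map (\<lambda>A. map (\<lambda>B. B ** A) Bs) As)) X"
proof (induction As)
  case Nil
  then show ?case by (simp add: tau_def)
next
  case (Cons A As)
  have "tau (map (\<lambda>B. B ** A) Bs) X = adj A ** tau Bs X ** A"
    unfolding tau_def sum_list_matrix_mult_left sum_list_matrix_mult_right
    by (simp add: o_def adj_matrix_mult matrix_mul_assoc)
  then show ?case
    using Cons by (simp add: tau_Cons tau_append)
qed

section \<open>Generated subalgebras\<close>

fun monomials :: "('m::finite) cmat list \<Rightarrow> nat \<Rightarrow> 'm cmat list" where
  "monomials As 0 = [mat 1]"
| "monomials As (Suc n) = concat (map (\<lambda>A. map (\<lambda>B. B ** A) (monomials As n)) As)"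

lemma funpow_tau: "tau As ^^ n = tau (monomials As n)"
  by (induction n) (simp_all add: fun_eq_iff tau_def tau_tau[unfolded tau_def])

lemma monomials_mult:
  "C \<in> set (monomials As n) \<Longrightarrow> D \<in> set (monomials As k) \<Longrightarrow> C ** D \<in> set (monomials As (n + k))"
proof (induction k arbitrary: D)
  case 0
  then show ?case by simp
next
  case (Suc k)
  then obtain A B where "A \<in> set As" "B \<in> set (monomials As k)" "D = B ** A"
    by auto
  then show ?case
    using Suc.IH[of B] Suc.prems(1) by (auto simp: matrix_mul_assoc)
qed

lemma set_monomials_1: "set (monomials As 1) = set As"
  by auto

lemma monomials_Suc_subset_subalg:
  assumes "is_subalg B" "set As \<subseteq> B"
  shows "set (monomials As (Suc n)) \<subseteq> B"
proof (induction n)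
  case 0
  then show ?case using assms by auto
next
  case (Suc n)
  have "C ** A \<in> B" if "A \<in> set As" "C \<in> set (monomials As (Suc n))" for A C
    using that assms Suc unfolding is_subalg_def by auto
  then show ?case
    by (auto simp del: monomials.simps(2) simp: monomials.simps(2)[of As "Suc n"])
qed

lemma span_mult_closed:
  assumes closed: "\<And>x y. x \<in> S \<Longrightarrow> y \<in> S \<Longrightarrow> x ** y \<in> S"
    and x: "x \<in> cmat.span S" and y: "y \<in> cmat.span (S :: ('m::finite) cmat set)"
  shows "x ** y \<in> cmat.span S"
proof -
  have left_base: "z ** y \<in> cmat.span S" if "z \<in> S" for z
  proof -
    have "y \<in> {y. z ** y \<in> cmat.span S}"
      using y
    proof (rule cmat.span_subspace_induct)
      show "cmat.subspace {y. z ** y \<in> cmat.span S}"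
        unfolding cmat.subspace_def
        by (auto simp: matrix_add_ldistrib cscale_matrix_mult_right
            intro: cmat.span_zero cmat.span_add cmat.span_scale)
      show "w \<in> {y. z ** y \<in> cmat.span S}" if "w \<in> S" for w
        using closed[OF \<open>z \<in> S\<close> that] by (simp add: cmat.span_base)
    qed
    then show ?thesis by simp
  qed
  have "x \<in> {x. x ** y \<in> cmat.span S}"
    using x
  proof (rule cmat.span_subspace_induct)
    show "cmat.subspace {x. x ** y \<in> cmat.span S}"
      unfolding cmat.subspace_def
      by (auto simp: matrix_add_rdistrib cscale_matrix_mult_left
          intro: cmat.span_zero cmat.span_add cmat.span_scale)
    show "z \<in> {x. x ** y \<in> cmat.span S}" if "z \<in> S" for z
      using left_base[OF that] by simp
  qed
  then show ?thesis by simp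
qed

lemma is_subalg_span:
  assumes "\<And>x y. x \<in> S \<Longrightarrow> y \<in> S \<Longrightarrow> x ** y \<in> S"
  shows "is_subalg (cmat.span (S :: ('m::finite) cmat set))"
  unfolding is_subalg_def
  using span_mult_closed[OF assms] by (auto intro: cmat.span_zero cmat.span_add cmat.span_scale)

lemma is_subalg_subspace: "is_subalg B \<Longrightarrow> cmat.subspace B"
  by (simp add: is_subalg_def cmat.subspace_def)

lemma gen_ualg_eq_span_monomials: "gen_ualg (set As) = cmat.span (\<Union>n. set (monomials As n))"
proof
  let ?W = "\<Union>n. set (monomials As n)"
  have "is_subalg (cmat.span ?W)"
  proof (rule is_subalg_span)
    fix x y assume "x \<in> ?W" "y \<in> ?W"
    then obtain n k where "x \<in> set (monomials As n)" "y \<in> set (monomials As k)"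
      by blast
    then have "x ** y \<in> set (monomials As (n + k))"
      by (rule monomials_mult)
    then show "x ** y \<in> ?W"
      by blast
  qed
  moreover have "set As \<subseteq> cmat.span ?W" "mat 1 \<in> cmat.span ?W"
    using UN_upper[of 1 UNIV "\<lambda>n. set (monomials As n)"] UN_upper[of 0 UNIV "\<lambda>n. set (monomials As n)"]
      set_monomials_1[of As] cmat.span_superset[of ?W]
    by auto
  ultimately show "gen_ualg (set As) \<subseteq> cmat.span ?W"
    unfolding gen_ualg_def by blast
  show "cmat.span ?W \<subseteq> gen_ualg (set As)"
    unfolding gen_ualg_def
  proof (rule Inter_greatest)
    fix B assume "B \<in> {B. is_subalg B \<and> set As \<subseteq> B \<and> mat 1 \<in> B}"
    then have B: "is_subalg B" "set As \<subseteq> B" "mat 1 \<in> B" by auto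
    have "set (monomials As n) \<subseteq> B" for n
      using B(3) monomials_Suc_subset_subalg[OF B(1,2)] by (cases n) auto
    then have "?W \<subseteq> B"
      by blast
    then show "cmat.span ?W \<subseteq> B"
      using is_subalg_subspace[OF B(1)] by (rule cmat.span_minimal)
  qed
qed

lemma gen_alg_eq_span_monomials: "gen_alg (set As) = cmat.span (\<Union>n. set (monomials As (Suc n)))"
proof
  let ?W = "\<Union>n. set (monomials As (Suc n))"
  have "is_subalg (cmat.span ?W)"
  proof (rule is_subalg_span)
    fix x y assume "x \<in> ?W" "y \<in> ?W"
    then obtain n k where "x \<in> set (monomials As (Suc n))" "y \<in> set (monomials As (Suc k))"
      by blast
    then have "x ** y \<in> set (monomials As (Suc n + Suc k))"
      by (rule monomials_mult)
    then have "x ** y \<in> set (monomials As (Suc (n + Suc k)))"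
      by (simp only: add_Suc)
    then show "x ** y \<in> ?W" by blast
  qed
  moreover have "set As \<subseteq> cmat.span ?W"
    using UN_upper[of 0 UNIV "\<lambda>n. set (monomials As (Suc n))"] set_monomials_1[of As]
      cmat.span_superset[of ?W]
    by auto
  ultimately show "gen_alg (set As) \<subseteq> cmat.span ?W"
    unfolding gen_alg_def by blast
  show "cmat.span ?W \<subseteq> gen_alg (set As)"
    unfolding gen_alg_def
  proof (rule Inter_greatest)
    fix B assume "B \<in> {B. is_subalg B \<and> set As \<subseteq> B}"
    then have B: "is_subalg B" "set As \<subseteq> B" by auto
    have "?W \<subseteq> B"
      using monomials_Suc_subset_subalg[OF B] by blast
    then show "cmat.span ?W \<subseteq> B"
      using is_subalg_subspace[OF B(1)] by (rule cmat.span_minimal)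
  qed
qed

section \<open>Positive semidefinite kernels\<close>

definition kernel_form :: "('i::finite \<Rightarrow> 'i \<Rightarrow> complex) \<Rightarrow> ('i \<Rightarrow> complex) \<Rightarrow> complex" where
  "kernel_form G v = (\<Sum>p\<in>UNIV. \<Sum>q\<in>UNIV. v p * cnj (v q) * G p q)"

definition psd_kernel :: "('i::finite \<Rightarrow> 'i \<Rightarrow> complex) \<Rightarrow> bool" where
  "psd_kernel G \<longleftrightarrow> (\<forall>v. Im (kernel_form G v) = 0 \<and> Re (kernel_form G v) \<ge> 0)"

lemma cnj_of_bool [simp]: "cnj (of_bool b) = of_bool b"
  by (cases b) auto

lemma sum_delta_mult: "(\<Sum>q\<in>UNIV. of_bool (q = (i::'i::finite)) * f q) = (f i :: complex)"
proof -
  have "(\<Sum>q\<in>UNIV. of_bool (q = i) * f q) = (\<Sum>q\<in>UNIV. if q = i then f q else 0)"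
    by (intro sum.cong) auto
  then show ?thesis by simp
qed

lemma kernel_form_add_unit:
  "kernel_form G (\<lambda>r. v r + t * of_bool (r = i)) = kernel_form G v + cnj t * (\<Sum>p\<in>UNIV. v p * G p i)
     + t * (\<Sum>q\<in>UNIV. cnj (v q) * G i q) + t * cnj t * G i i"
proof -
  have "kernel_form G (\<lambda>r. v r + t * of_bool (r = i)) =
     (\<Sum>p\<in>UNIV. \<Sum>q\<in>UNIV. v p * cnj (v q) * G p q)
     + (\<Sum>p\<in>UNIV. \<Sum>q\<in>UNIV. of_bool (q = i) * (v p * cnj t * G p q))
     + (\<Sum>p\<in>UNIV. of_bool (p = i) * (\<Sum>q\<in>UNIV. t * cnj (v q) * G p q))
     + (\<Sum>p\<in>UNIV. of_bool (p = i) * (\<Sum>q\<in>UNIV. of_bool (q = i) * (t * cnj t * G p q)))"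
    unfolding kernel_form_def sum_distrib_left sum.distrib[symmetric]
    by (intro sum.cong refl) (simp add: algebra_simps)
  also have "\<dots> = kernel_form G v + cnj t * (\<Sum>p\<in>UNIV. v p * G p i)
     + t * (\<Sum>q\<in>UNIV. cnj (v q) * G i q) + t * cnj t * G i i"
    unfolding sum_delta_mult kernel_form_def by (simp add: sum_distrib_left algebra_simps)
  finally show ?thesis .
qed

lemma kernel_form_unit: "kernel_form G (\<lambda>r. t * of_bool (r = i)) = t * cnj t * G i i"
  using kernel_form_add_unit[of G "\<lambda>_. 0" t i] by (simp add: kernel_form_def)

lemma kernel_form_two_units:
  "kernel_form G (\<lambda>r. of_bool (r = p) + t * of_bool (r = q))
     = G p p + cnj t * G p q + t * G q p + t * cnj t * G q q"
  using kernel_form_add_unit[of G "\<lambda>r. 1 * of_bool (r = p)" t q] kernel_form_unit[of G 1 p]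
    sum_delta_mult[of p "\<lambda>n. G n q"] sum_delta_mult[of p "\<lambda>n. G q n"]
  by (simp add: sum_distrib_left)

lemma psd_kernel_diag:
  assumes "psd_kernel G"
  shows "Im (G i i) = 0" "Re (G i i) \<ge> 0"
  using assms kernel_form_unit[of G 1 i] unfolding psd_kernel_def by (metis complex_cnj_one mult_1)+

lemma psd_kernel_hermitian:
  assumes "psd_kernel G"
  shows "G q p = cnj (G p q)"
proof -
  have "Im (G p p + cnj t * G p q + t * G q p + t * cnj t * G q q) = 0" for t
    using assms kernel_form_two_units[of G p t q] unfolding psd_kernel_def by metis
  from this[of 1] this[of \<i>] psd_kernel_diag(1)[OF assms]
  have "Im (G p q + G q p) = 0" "Re (G q p) - Re (G p q) = 0"
    by simp_all
  then show ?thesis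
    by (simp add: complex_eq_iff)
qed

text \<open>At \<open>e\<^sub>q - t cnj (G i q) e\<^sub>i\<close> the form is \<open>G q q - 2 t \<bar>G i q\<bar>\<^sup>2\<close>, negative for large \<open>t\<close>.\<close>

lemma psd_kernel_zero_diag_row:
  assumes "psd_kernel G" "G i i = 0"
  shows "G i q = 0"
proof (rule ccontr)
  define w where "w = G i q"
  assume "G i q \<noteq> 0"
  then have norm_pos: "cmod w ^ 2 > 0"
    by (simp add: w_def)
  define t where "t = (Re (G q q) + 1) / (2 * cmod w ^ 2)"
  define z where "z = - (of_real t * cnj w)"
  have zw: "z * w = - of_real (t * cmod w ^ 2)"
    unfolding z_def by (simp add: ac_simps flip: complex_norm_square)
  have "kernel_form G (\<lambda>r. of_bool (r = q) + z * of_bool (r = i)) = G q q + cnj (z * w) + z * w"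
    using kernel_form_two_units[of G q z i] psd_kernel_hermitian[OF assms(1), of q i] assms(2)
    by (simp add: w_def)
  also have "\<dots> = G q q - of_real (Re (G q q) + 1)"
    using norm_pos by (simp add: zw t_def)
  finally have "Re (kernel_form G (\<lambda>r. of_bool (r = q) + z * of_bool (r = i))) < 0"
    by simp
  then show False
    using assms(1) unfolding psd_kernel_def by (meson not_le)
qed

lemma psd_kernel_schur_complement:
  assumes "psd_kernel G" "G i i \<noteq> 0"
  shows "psd_kernel (\<lambda>p q. G p q - G p i * G i q / G i i)"
  unfolding psd_kernel_def
proof
  fix v
  define g where "g = G i i"
  have g0: "g \<noteq> 0" and g_real: "cnj g = g"
    using assms psd_kernel_diag[OF assms(1), of i] by (simp_all add: g_def complex_eq_iff)
  define s where "s = (\<Sum>p\<in>UNIV. v p * G p i)"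
  have s_cnj: "(\<Sum>q\<in>UNIV. cnj (v q) * G i q) = cnj s"
    unfolding s_def cnj_sum
    by (intro sum.cong refl) (simp add: psd_kernel_hermitian[OF assms(1), of i])
  define t where "t = - s / g"
  have sum_eq: "(\<Sum>p\<in>UNIV. \<Sum>q\<in>UNIV. v p * G p i * (cnj (v q) * G i q)) = s * cnj s"
    unfolding s_def sum_product[symmetric] s_cnj ..
  have "kernel_form (\<lambda>p q. G p q - G p i * G i q / G i i) v
      = kernel_form G v - (\<Sum>p\<in>UNIV. \<Sum>q\<in>UNIV. v p * G p i * (cnj (v q) * G i q)) / g"
    unfolding kernel_form_def g_def by (simp add: algebra_simps sum_subtractf sum_divide_distrib)
  also have "\<dots> = kernel_form G v - s * cnj s / g"
    unfolding sum_eq ..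
  also have "\<dots> = kernel_form G v + (cnj t * s + t * cnj s + t * cnj t * g)"
    using g0 g_real by (simp add: t_def field_simps)
  also have "\<dots> = kernel_form G (\<lambda>r. v r + t * of_bool (r = i))"
    unfolding kernel_form_add_unit s_def[symmetric] s_cnj g_def[symmetric] by (simp only: add.assoc)
  finally show "Im (kernel_form (\<lambda>p q. G p q - G p i * G i q / G i i) v) = 0
      \<and> 0 \<le> Re (kernel_form (\<lambda>p q. G p q - G p i * G i q / G i i) v)"
    using assms(1) unfolding psd_kernel_def by metis
qed

lemma card_support_schur_complement_less:
  fixes G :: "'i::finite \<Rightarrow> 'i \<Rightarrow> complex"
  assumes "G i i \<noteq> 0"
  shows "card {p. \<exists>q. G p q - G p i * G i q / G i i \<noteq> 0} < card {p. \<exists>q. G p q \<noteq> 0}"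
proof -
  have "{p. \<exists>q. G p q - G p i * G i q / G i i \<noteq> 0} \<subseteq> {p. \<exists>q. G p q \<noteq> 0} - {i}"
  proof
    fix p assume "p \<in> {p. \<exists>q. G p q - G p i * G i q / G i i \<noteq> 0}"
    then obtain q where "G p q - G p i * G i q / G i i \<noteq> 0"
      by blast
    then have "G p q \<noteq> 0 \<or> G p i \<noteq> 0" "p \<noteq> i"
      using assms by auto
    then show "p \<in> {p. \<exists>q. G p q \<noteq> 0} - {i}"
      by blast
  qed
  then have "{p. \<exists>q. G p q - G p i * G i q / G i i \<noteq> 0} \<subset> {p. \<exists>q. G p q \<noteq> 0}"
    using assms by blast
  then show ?thesis
    by (simp add: psubset_card_mono)
qed

lemma psd_kernel_rank_one_part:
  assumes "psd_kernel G"
  obtains y where "\<And>p q. cnj (y p) * y q = G p i * G i q / G i i"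
proof -
  define s where "s = complex_of_real (sqrt (Re (G i i)))"
  have s: "s * s = G i i"
    using psd_kernel_diag[OF assms, of i] by (simp add: s_def complex_eq_iff flip: of_real_mult)
  have "cnj (G i p / s) * (G i q / s) = cnj (G i p) * G i q / (s * s)" for p q
    by (simp add: s_def)
  then have "cnj (G i p / s) * (G i q / s) = G p i * G i q / G i i" for p q
    unfolding s using psd_kernel_hermitian[OF assms, of p i] by simp
  then show ?thesis
    by (rule that)
qed

text \<open>Cholesky elimination: splitting off the rank-one part through a nonzero diagonal entry leaves a
  positive semidefinite Schur complement with one more vanishing row.\<close>

lemma psd_kernel_gram:
  fixes G :: "'i::finite \<Rightarrow> 'i \<Rightarrow> complex"
  assumes "psd_kernel G"
  shows "\<exists>xs. \<forall>p q. G p q = (\<Sum>x\<leftarrow>xs. cnj (x p) * x q)"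
  using assms
proof (induction "card {p. \<exists>q. G p q \<noteq> 0}" arbitrary: G rule: less_induct)
  case less
  show ?case
  proof (cases "\<exists>i. G i i \<noteq> 0")
    case False
    then have "G p q = 0" for p q
      using psd_kernel_zero_diag_row[OF less.prems] by blast
    then show ?thesis
      by (intro exI[of _ "[]"]) simp
  next
    case True
    then obtain i where i: "G i i \<noteq> 0" by blast
    define G' where "G' = (\<lambda>p q. G p q - G p i * G i q / G i i)"
    have "card {p. \<exists>q. G' p q \<noteq> 0} < card {p. \<exists>q. G p q \<noteq> 0}"
      unfolding G'_def using i by (rule card_support_schur_complement_less)
    moreover have "psd_kernel G'"
      unfolding G'_def by (rule psd_kernel_schur_complement[OF less.prems i])
    ultimately have "\<exists>xs. \<forall>p q. G' p q = (\<Sum>x\<leftarrow>xs. cnj (x p) * x q)"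
      by (rule less.hyps)
    then obtain xs where xs: "\<And>p q. G' p q = (\<Sum>x\<leftarrow>xs. cnj (x p) * x q)"
      by blast
    obtain y where "\<And>p q. cnj (y p) * y q = G p i * G i q / G i i"
      using psd_kernel_rank_one_part[OF less.prems] by blast
    then have "G p q = (\<Sum>x\<leftarrow>y # xs. cnj (x p) * x q)" for p q
      unfolding sum_list.Cons list.map xs[symmetric] by (simp add: G'_def)
    then show ?thesis
      by blast
  qed
qed

lemma kernel_form_gram:
  "kernel_form (\<lambda>p q. \<Sum>x\<leftarrow>xs. cnj (x p) * x q) v
     = (\<Sum>x\<leftarrow>xs. of_real (cmod (\<Sum>q\<in>UNIV. cnj (v q) * x q) ^ 2))"
proof (induction xs)
  case Nil
  then show ?case by (simp add: kernel_form_def)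
next
  case (Cons x xs)
  have "kernel_form (\<lambda>p q. cnj (x p) * x q) v = (\<Sum>p\<in>UNIV. v p * cnj (x p)) * (\<Sum>q\<in>UNIV. cnj (v q) * x q)"
    unfolding kernel_form_def sum_product by (intro sum.cong refl) (simp add: ac_simps)
  also have "\<dots> = cnj (\<Sum>q\<in>UNIV. cnj (v q) * x q) * (\<Sum>q\<in>UNIV. cnj (v q) * x q)"
    by simp
  also have "\<dots> = of_real (cmod (\<Sum>q\<in>UNIV. cnj (v q) * x q) ^ 2)"
    by (simp only: complex_norm_square mult.commute)
  finally show ?case
    using Cons by (simp add: kernel_form_def algebra_simps sum.distrib)
qed

section \<open>The Choi matrix\<close>

definition matrix_unit :: "'m \<Rightarrow> 'm \<Rightarrow> ('m::finite) cmat" where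
  "matrix_unit a c = (\<chi> i j. if i = a \<and> j = c then 1 else 0)"

definition vec_of_cmat :: "('m::finite) cmat \<Rightarrow> 'm \<times> 'm \<Rightarrow> complex" where
  "vec_of_cmat M p = M $ fst p $ snd p"

definition cmat_of_vec :: "('m::finite \<times> 'm \<Rightarrow> complex) \<Rightarrow> 'm cmat" where
  "cmat_of_vec x = (\<chi> a b. x (a, b))"

lemma vec_of_cmat_of_vec [simp]: "vec_of_cmat (cmat_of_vec x) = x"
  by (simp add: vec_of_cmat_def cmat_of_vec_def fun_eq_iff)

text \<open>The entry of \<open>\<Sum>\<^sub>a\<^sub>c E\<^sub>a\<^sub>c \<otimes> \<phi> E\<^sub>a\<^sub>c\<close> in row \<open>(a, b)\<close> and column \<open>(c, d)\<close>.\<close>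

definition choi_matrix :: "(('m::finite) cmat \<Rightarrow> 'm cmat) \<Rightarrow> 'm \<times> 'm \<Rightarrow> 'm \<times> 'm \<Rightarrow> complex" where
  "choi_matrix \<phi> p q = \<phi> (matrix_unit (fst p) (fst q)) $ snd p $ snd q"

definition choi_form :: "(('m::finite) cmat \<Rightarrow> 'm cmat) \<Rightarrow> 'm cmat \<Rightarrow> complex" where
  "choi_form \<phi> Y = kernel_form (choi_matrix \<phi>) (vec_of_cmat Y)"

definition frob_inner :: "('m::finite) cmat \<Rightarrow> 'm cmat \<Rightarrow> complex" where
  "frob_inner Y C = (\<Sum>a\<in>UNIV. \<Sum>b\<in>UNIV. cnj (Y $ a $ b) * C $ a $ b)"

text \<open>Complex linearity, in the form needed to recover a map from its Choi matrix; the maps of the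
  theorem are a priori only real-linear.\<close>

definition matrix_unit_expansion :: "(('m::finite) cmat \<Rightarrow> 'm cmat) \<Rightarrow> bool" where
  "matrix_unit_expansion \<phi> \<longleftrightarrow>
     (\<forall>X b d. \<phi> X $ b $ d = (\<Sum>a\<in>UNIV. \<Sum>c\<in>UNIV. X $ a $ c * \<phi> (matrix_unit a c) $ b $ d))"

lemma sum_UNIV_prod: "(\<Sum>p\<in>UNIV. g p) = (\<Sum>a\<in>UNIV. \<Sum>b\<in>UNIV. g (a, b))"
  by (simp add: sum.cartesian_product UNIV_Times_UNIV[symmetric] del: UNIV_Times_UNIV)

lemma frob_inner_eq_sum_vec: "frob_inner Y C = (\<Sum>p\<in>UNIV. cnj (vec_of_cmat Y p) * vec_of_cmat C p)"
  by (simp add: frob_inner_def sum_UNIV_prod vec_of_cmat_def)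

lemma adj_mult_matrix_unit_nth: "(adj C ** matrix_unit a' c' ** C) $ b $ d = cnj (C $ a' $ b) * C $ c' $ d"
proof -
  have "(\<Sum>a\<in>UNIV. cnj (C $ a $ b) * matrix_unit a' c' $ a $ c * C $ c $ d)
      = (if c = c' then cnj (C $ a' $ b) * C $ c $ d else 0)" for c
  proof -
    have "(\<Sum>a\<in>UNIV. cnj (C $ a $ b) * matrix_unit a' c' $ a $ c * C $ c $ d)
        = (\<Sum>a\<in>UNIV. if a = a' then (if c = c' then cnj (C $ a' $ b) * C $ c $ d else 0) else 0)"
      by (intro sum.cong) (auto simp: matrix_unit_def)
    then show ?thesis by simp
  qed
  then show ?thesis
    by (simp add: adj_mult_mult_nth)
qed

lemma choi_matrix_tau: "choi_matrix (tau Cs) p q = (\<Sum>C\<leftarrow>Cs. cnj (vec_of_cmat C p) * vec_of_cmat C q)"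
  by (induction Cs) (simp_all add: choi_matrix_def tau_def adj_mult_matrix_unit_nth vec_of_cmat_def)

lemma choi_form_tau: "choi_form (tau Cs) Y = of_real (\<Sum>C\<leftarrow>Cs. cmod (frob_inner Y C) ^ 2)"
proof -
  have "choi_matrix (tau Cs) = (\<lambda>p q. \<Sum>x\<leftarrow>map vec_of_cmat Cs. cnj (x p) * x q)"
    by (simp add: fun_eq_iff choi_matrix_tau o_def)
  then have "choi_form (tau Cs) Y
      = (\<Sum>x\<leftarrow>map vec_of_cmat Cs. of_real (cmod (\<Sum>p\<in>UNIV. cnj (vec_of_cmat Y p) * x p) ^ 2))"
    unfolding choi_form_def by (simp only: kernel_form_gram)
  also have "\<dots> = of_real (\<Sum>C\<leftarrow>Cs. cmod (\<Sum>p\<in>UNIV. cnj (vec_of_cmat Y p) * vec_of_cmat C p) ^ 2)"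
    by (induction Cs) simp_all
  finally show ?thesis
    unfolding frob_inner_eq_sum_vec .
qed

lemma matrix_unit_expansion_tau: "matrix_unit_expansion (tau Cs)"
  unfolding matrix_unit_expansion_def
proof (intro allI)
  fix X b d
  show "tau Cs X $ b $ d = (\<Sum>a\<in>UNIV. \<Sum>c\<in>UNIV. X $ a $ c * tau Cs (matrix_unit a c) $ b $ d)"
  proof (induction Cs)
    case Nil
    then show ?case by (simp add: tau_def)
  next
    case (Cons C Cs)
    have "(adj C ** X ** C) $ b $ d
        = (\<Sum>a\<in>UNIV. \<Sum>c\<in>UNIV. X $ a $ c * (adj C ** matrix_unit a c ** C) $ b $ d)"
      unfolding adj_mult_matrix_unit_nth adj_mult_mult_nth[of C X]
      by (subst sum.swap) (simp add: algebra_simps)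
    then show ?case
      using Cons by (simp add: tau_Cons algebra_simps sum.distrib)
  qed
qed

lemma matrix_unit_expansion_diff:
  fixes \<phi> \<psi> :: "('m::finite) cmat \<Rightarrow> 'm cmat"
  assumes "matrix_unit_expansion \<phi>" "matrix_unit_expansion \<psi>"
  shows "matrix_unit_expansion (\<lambda>X. \<phi> X - q *\<^sub>R \<psi> X)"
  unfolding matrix_unit_expansion_def
proof (intro allI)
  fix X :: "'m cmat" and b d
  have "\<phi> X $ b $ d = (\<Sum>a\<in>UNIV. \<Sum>c\<in>UNIV. X $ a $ c * \<phi> (matrix_unit a c) $ b $ d)"
    "\<psi> X $ b $ d = (\<Sum>a\<in>UNIV. \<Sum>c\<in>UNIV. X $ a $ c * \<psi> (matrix_unit a c) $ b $ d)"
    using assms unfolding matrix_unit_expansion_def by blast+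
  then show "(\<phi> X - q *\<^sub>R \<psi> X) $ b $ d
      = (\<Sum>a\<in>UNIV. \<Sum>c\<in>UNIV. X $ a $ c * (\<phi> (matrix_unit a c) - q *\<^sub>R \<psi> (matrix_unit a c)) $ b $ d)"
    by (simp add: scaleR_cmat_nth algebra_simps sum_subtractf sum_distrib_left
        del: vector_scaleR_component)
qed

lemma choi_form_diff: "choi_form (\<lambda>X. \<phi> X - q *\<^sub>R \<psi> X) Y = choi_form \<phi> Y - of_real q * choi_form \<psi> Y"
  unfolding choi_form_def kernel_form_def choi_matrix_def
  by (simp add: scaleR_cmat_nth algebra_simps sum_subtractf sum_distrib_left
      del: vector_scaleR_component)

lemma choi_matrix_inject:
  assumes "matrix_unit_expansion \<phi>" "matrix_unit_expansion \<psi>" "choi_matrix \<phi> = choi_matrix \<psi>"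
  shows "\<phi> = \<psi>"
proof
  fix X
  have units: "\<phi> (matrix_unit a c) $ b $ d = \<psi> (matrix_unit a c) $ b $ d" for a b c d
    using fun_cong[OF fun_cong[OF assms(3), of "(a, b)"], of "(c, d)"] by (simp add: choi_matrix_def)
  have "\<phi> X $ b $ d = \<psi> X $ b $ d" for b d
  proof -
    have "\<phi> X $ b $ d = (\<Sum>a\<in>UNIV. \<Sum>c\<in>UNIV. X $ a $ c * \<phi> (matrix_unit a c) $ b $ d)"
      using assms(1) unfolding matrix_unit_expansion_def by blast
    also have "\<dots> = (\<Sum>a\<in>UNIV. \<Sum>c\<in>UNIV. X $ a $ c * \<psi> (matrix_unit a c) $ b $ d)"
      by (simp only: units)
    also have "\<dots> = \<psi> X $ b $ d"
      using assms(2) unfolding matrix_unit_expansion_def by metis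
    finally show ?thesis .
  qed
  then show "\<phi> X = \<psi> X"
    by (simp add: vec_eq_iff)
qed

text \<open>Choi's theorem: a Gram decomposition of the Choi matrix yields the Kraus coefficients.\<close>

lemma kraus_decomp_if_choi_form_nonneg:
  assumes "matrix_unit_expansion \<phi>" "\<And>Y. Im (choi_form \<phi> Y) = 0 \<and> Re (choi_form \<phi> Y) \<ge> 0"
  obtains Cs where "kraus_decomp \<phi> Cs"
proof -
  have "psd_kernel (choi_matrix \<phi>)"
    unfolding psd_kernel_def using assms(2)[of "cmat_of_vec _"] by (simp add: choi_form_def)
  then obtain xs where xs: "\<And>p q. choi_matrix \<phi> p q = (\<Sum>x\<leftarrow>xs. cnj (x p) * x q)"
    using psd_kernel_gram by blast
  have "choi_matrix \<phi> = choi_matrix (tau (map cmat_of_vec xs))"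
    by (simp add: fun_eq_iff xs choi_matrix_tau o_def)
  then have "\<phi> = tau (map cmat_of_vec xs)"
    using choi_matrix_inject[OF assms(1) matrix_unit_expansion_tau] by blast
  then show ?thesis
    using that by (simp add: kraus_decomp_iff_tau)
qed

section \<open>Complete positivity\<close>

definition block_form :: "nat \<Rightarrow> (nat \<Rightarrow> nat \<Rightarrow> ('m::finite) cmat) \<Rightarrow> (nat \<Rightarrow> complex^'m) \<Rightarrow> complex" where
  "block_form k B v = (\<Sum>i<k. \<Sum>j<k. cinner (v i) (B i j *v v j))"

lemma psd_block_iff_block_form: "psd_block k B \<longleftrightarrow> (\<forall>v. Im (block_form k B v) = 0 \<and> Re (block_form k B v) \<ge> 0)"
  by (simp add: psd_block_def block_form_def Let_def)

lemma cinner_add_right: "cinner u (x + y) = cinner u x + cinner u y"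
  by (simp add: cinner_def sum.distrib algebra_simps)

lemma cinner_adj_mult: "cinner u (adj C *v w) = cinner (C *v u) (w :: complex^'m::finite)"
proof -
  have "cinner u (adj C *v w) = (\<Sum>l\<in>UNIV. \<Sum>k\<in>UNIV. cnj (u $ l) * (cnj (C $ k $ l) * w $ k))"
    by (simp add: cinner_def matrix_vector_mult_def sum_distrib_left)
  also have "\<dots> = (\<Sum>k\<in>UNIV. \<Sum>l\<in>UNIV. cnj (u $ l) * (cnj (C $ k $ l) * w $ k))"
    by (rule sum.swap)
  also have "\<dots> = cinner (C *v u) w"
    by (simp add: cinner_def matrix_vector_mult_def sum_distrib_left algebra_simps)
  finally show ?thesis .
qed

lemma block_form_add: "block_form k (\<lambda>i j. B i j + B' i j) v = block_form k B v + block_form k B' v"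
  by (simp add: block_form_def matrix_vector_mult_add_rdistrib cinner_add_right sum.distrib)

lemma block_form_adj_mult: "block_form k (\<lambda>i j. adj C ** B i j ** C) v = block_form k B (\<lambda>i. C *v v i)"
  by (simp add: block_form_def matrix_vector_mul_assoc[symmetric] cinner_adj_mult)

lemma completely_positive_tau:
  fixes Cs :: "('m::finite) cmat list"
  shows "completely_positive (tau Cs)"
  unfolding completely_positive_def
proof (intro allI impI)
  fix k and B :: "nat \<Rightarrow> nat \<Rightarrow> 'm cmat"
  assume B: "psd_block k B"
  show "psd_block k (\<lambda>i j. tau Cs (B i j))"
  proof (induction Cs)
    case Nil
    then show ?case by (simp add: psd_block_iff_block_form block_form_def tau_def cinner_def)
  next
    case (Cons C Cs)
    have "block_form k (\<lambda>i j. tau (C # Cs) (B i j)) v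
        = block_form k B (\<lambda>i. C *v v i) + block_form k (\<lambda>i j. tau Cs (B i j)) v" for v
      unfolding tau_Cons block_form_add block_form_adj_mult ..
    then show ?case
      using Cons B unfolding psd_block_iff_block_form by simp
  qed
qed

lemma cinner_matrix_unit_mult: "cinner w (matrix_unit a c *v u) = cnj (w $ a) * u $ c"
proof -
  have "(matrix_unit a c *v u) $ l = (if l = a then u $ c else 0)" for l
  proof -
    have "(\<Sum>k\<in>UNIV. matrix_unit a c $ l $ k * u $ k) = (\<Sum>k\<in>UNIV. if k = c then (if l = a then u $ c else 0) else 0)"
      by (intro sum.cong) (auto simp: matrix_unit_def)
    then show ?thesis by (simp add: matrix_vector_mult_def)
  qed
  then have "cinner w (matrix_unit a c *v u) = (\<Sum>l\<in>UNIV. if l = a then cnj (w $ a) * u $ c else 0)"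
    unfolding cinner_def by (intro sum.cong) auto
  then show ?thesis by simp
qed

lemma psd_block_matrix_units:
  fixes e :: "nat \<Rightarrow> 'm::finite"
  shows "psd_block k (\<lambda>i j. matrix_unit (e i) (e j))"
  unfolding psd_block_iff_block_form
proof
  fix w :: "nat \<Rightarrow> complex^'m"
  have "block_form k (\<lambda>i j. matrix_unit (e i) (e j)) w = cnj (\<Sum>i<k. w i $ e i) * (\<Sum>j<k. w j $ e j)"
    by (simp add: block_form_def cinner_matrix_unit_mult sum_product)
  also have "\<dots> = of_real (cmod (\<Sum>j<k. w j $ e j) ^ 2)"
    by (simp only: complex_norm_square mult.commute)
  finally show "Im (block_form k (\<lambda>i j. matrix_unit (e i) (e j)) w) = 0
      \<and> 0 \<le> Re (block_form k (\<lambda>i j. matrix_unit (e i) (e j)) w)"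
    by simp
qed

text \<open>Evaluating \<open>id\<^sub>k \<otimes> \<phi>\<close> at the positive matrix \<open>\<Sum>\<^sub>a\<^sub>c E\<^sub>a\<^sub>c \<otimes> E\<^sub>a\<^sub>c\<close>, with \<open>k = m\<close>, gives
  the Choi matrix.\<close>

lemma block_form_matrix_units_eq_choi_form:
  assumes e: "bij_betw e {..<k} (UNIV :: 'm::finite set)"
  shows "block_form k (\<lambda>i j. \<phi> (matrix_unit (e i) (e j))) (\<lambda>i. \<chi> b. cnj (Y $ e i $ b)) = choi_form \<phi> Y"
proof -
  have reindex: "(\<Sum>i<k. h (e i)) = (\<Sum>a\<in>UNIV. h a)" for h :: "'m \<Rightarrow> complex"
    using sum.reindex_bij_betw[OF e, of h] .
  have reindex2: "(\<Sum>i<k. \<Sum>j<k. F (e i) (e j)) = (\<Sum>a\<in>UNIV. \<Sum>c\<in>UNIV. F a c)"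
    for F :: "'m \<Rightarrow> 'm \<Rightarrow> complex"
    using reindex[of "\<lambda>a. \<Sum>c\<in>UNIV. F a c"] reindex[of "F _"] by simp
  have "block_form k (\<lambda>i j. \<phi> (matrix_unit (e i) (e j))) (\<lambda>i. \<chi> b. cnj (Y $ e i $ b))
      = (\<Sum>i<k. \<Sum>j<k. \<Sum>b\<in>UNIV. \<Sum>d\<in>UNIV.
           Y $ e i $ b * cnj (Y $ e j $ d) * \<phi> (matrix_unit (e i) (e j)) $ b $ d)"
    by (simp add: block_form_def cinner_def matrix_vector_mult_def sum_distrib_left ac_simps)
  also have "\<dots> = (\<Sum>a\<in>UNIV. \<Sum>c\<in>UNIV. \<Sum>b\<in>UNIV. \<Sum>d\<in>UNIV.
      Y $ a $ b * cnj (Y $ c $ d) * \<phi> (matrix_unit a c) $ b $ d)"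
    by (rule reindex2)
  also have "\<dots> = (\<Sum>a\<in>UNIV. \<Sum>b\<in>UNIV. \<Sum>c\<in>UNIV. \<Sum>d\<in>UNIV.
      Y $ a $ b * cnj (Y $ c $ d) * \<phi> (matrix_unit a c) $ b $ d)"
    by (intro sum.cong refl sum.swap)
  also have "\<dots> = choi_form \<phi> Y"
    by (simp add: choi_form_def kernel_form_def sum_UNIV_prod choi_matrix_def vec_of_cmat_def)
  finally show ?thesis .
qed

lemma choi_form_nonneg_if_completely_positive:
  assumes "completely_positive (\<phi> :: ('m::finite) cmat \<Rightarrow> 'm cmat)"
  shows "Im (choi_form \<phi> Y) = 0 \<and> Re (choi_form \<phi> Y) \<ge> 0"
proof -
  obtain e where e: "bij_betw e {..<CARD('m)} (UNIV :: 'm set)"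
    using ex_bij_betw_nat_finite[of "UNIV :: 'm set"] by (auto simp: lessThan_atLeast0)
  have "psd_block CARD('m) (\<lambda>i j. \<phi> (matrix_unit (e i) (e j)))"
    using assms psd_block_matrix_units unfolding completely_positive_def by blast
  then show ?thesis
    unfolding psd_block_iff_block_form block_form_matrix_units_eq_choi_form[OF e, symmetric] by blast
qed

section \<open>Annihilators\<close>

lemma frob_inner_cscale: "frob_inner Y (cscale c X) = c * frob_inner Y X"
  by (simp add: frob_inner_def sum_distrib_left ac_simps)

lemma frob_inner_add: "frob_inner Y (X + Z) = frob_inner Y X + frob_inner Y Z"
  by (simp add: frob_inner_def sum.distrib algebra_simps)

lemma frob_inner_zero: "frob_inner Y 0 = 0"
  by (simp add: frob_inner_def)

lemma frob_inner_sum: "frob_inner Y (sum g A) = (\<Sum>v\<in>A. frob_inner Y (g v))"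
  by (induction A rule: infinite_finite_induct) (simp_all add: frob_inner_add frob_inner_zero)

lemma inner_eq_Re_frob_inner: "inner Y X = Re (frob_inner Y (X :: ('m::finite) cmat))"
  by (simp add: frob_inner_def inner_vec_def inner_complex_def Re_sum)

lemma subspace_cmat_span: "subspace (cmat.span (S :: ('m::finite) cmat set))"
  unfolding subspace_def
  by (auto simp: cmat.span_zero cmat.span_add scaleR_eq_cscale intro: cmat.span_scale)

text \<open>Project onto the real span of \<open>S \<union> i S\<close>: real orthogonality to both \<open>v\<close> and \<open>i v\<close> is
  orthogonality for the complex inner product.\<close>

lemma frob_inner_separation:
  fixes X :: "('m::finite) cmat"
  assumes "X \<notin> cmat.span S"
  obtains Y where "\<And>v. v \<in> S \<Longrightarrow> frob_inner Y v = 0" "frob_inner Y X \<noteq> 0"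
proof -
  define S' where "S' = S \<union> cscale \<i> ` S"
  have "span S' \<subseteq> cmat.span S"
    by (rule span_minimal)
      (auto simp: S'_def subspace_cmat_span intro: cmat.span_base cmat.span_scale)
  moreover obtain y z where y: "y \<in> span S'" and z: "\<And>w. w \<in> span S' \<Longrightarrow> orthogonal z w"
    and X: "X = y + z"
    using orthogonal_subspace_decomp_exists[of S' X] by blast
  ultimately have "z \<noteq> 0"
    using assms by auto
  have "Re (frob_inner z X) = inner z z"
    using z[OF y] by (simp add: X inner_add_right orthogonal_def flip: inner_eq_Re_frob_inner)
  with \<open>z \<noteq> 0\<close> have "frob_inner z X \<noteq> 0"
    by auto
  moreover have "frob_inner z v = 0" if "v \<in> S" for v
  proof -
    have "v \<in> span S'" "cscale \<i> v \<in> span S'"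
      using that by (auto simp: S'_def intro: span_base)
    then have "inner z v = 0" "inner z (cscale \<i> v) = 0"
      using z by (auto simp: orthogonal_def)
    then have "Re (frob_inner z v) = 0" "Re (\<i> * frob_inner z v) = 0"
      by (simp_all add: inner_eq_Re_frob_inner frob_inner_cscale)
    then show ?thesis
      by (simp add: complex_eq_iff)
  qed
  ultimately show ?thesis
    using that by blast
qed

lemma in_cmat_span_iff_annihilator:
  "C \<in> cmat.span S \<longleftrightarrow> (\<forall>Y. (\<forall>v\<in>S. frob_inner Y v = 0) \<longrightarrow> frob_inner Y C = 0)"
proof
  assume C: "C \<in> cmat.span S"
  show "\<forall>Y. (\<forall>v\<in>S. frob_inner Y v = 0) \<longrightarrow> frob_inner Y C = 0"
  proof (intro allI impI)
    fix Y assume "\<forall>v\<in>S. frob_inner Y v = 0"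
    moreover have "cmat.subspace {C. frob_inner Y C = 0}"
      by (simp add: cmat.subspace_def frob_inner_add frob_inner_cscale frob_inner_zero)
    ultimately have "cmat.span S \<subseteq> {C. frob_inner Y C = 0}"
      by (intro cmat.span_minimal) auto
    then show "frob_inner Y C = 0"
      using C by blast
  qed
qed (meson frob_inner_separation)

section \<open>Kraus coefficients\<close>

lemma choi_form_tau_eq_0_iff: "choi_form (tau Cs) Y = 0 \<longleftrightarrow> (\<forall>C\<in>set Cs. frob_inner Y C = 0)"
  unfolding choi_form_tau of_real_eq_0_iff by (subst sum_list_nonneg_eq_0_iff) auto

lemma kraus_coeff_span_eq:
  assumes "kraus_decomp \<phi> Cs" "\<And>Y. choi_form \<phi> Y = 0 \<longleftrightarrow> (\<forall>C\<in>S. frob_inner Y C = 0)"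
  shows "cmat.span (set Cs) = cmat.span S"
  using assms by (auto simp: in_cmat_span_iff_annihilator kraus_decomp_iff_tau choi_form_tau_eq_0_iff)

lemma coeff_space_eq_span:
  assumes "kraus_decomp \<phi> Cs"
  shows "coeff_space \<phi> = cmat.span (set Cs)"
proof -
  have "kraus_decomp \<phi> (SOME Ds. kraus_decomp \<phi> Ds)"
    using assms by (rule someI)
  then show ?thesis
    unfolding coeff_space_def
    by (rule kraus_coeff_span_eq) (use assms in \<open>simp add: kraus_decomp_iff_tau choi_form_tau_eq_0_iff\<close>)
qed

lemma frob_inner_dominated_by_coeffs:
  assumes "A \<in> cmat.span (set Cs)"
  obtains q :: real where "q > 0" "\<And>Y. q * cmod (frob_inner Y A) ^ 2 \<le> (\<Sum>C\<leftarrow>Cs. cmod (frob_inner Y C) ^ 2)"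
proof -
  obtain t r where t: "finite t" "t \<subseteq> set Cs" and A: "A = (\<Sum>v\<in>t. cscale (r v) v)"
    using assms unfolding cmat.span_explicit by blast
  define R where "R = (\<Sum>v\<in>t. cmod (r v))"
  have "R \<ge> 0"
    by (simp add: R_def sum_nonneg)
  have "cmod (frob_inner Y A) ^ 2 \<le> (R ^ 2 + 1) * (\<Sum>C\<leftarrow>Cs. cmod (frob_inner Y C) ^ 2)" for Y
  proof -
    define S where "S = (\<Sum>C\<leftarrow>Cs. cmod (frob_inner Y C) ^ 2)"
    have "S \<ge> 0"
      unfolding S_def by (intro sum_list_nonneg) auto
    have le: "cmod (frob_inner Y v) \<le> sqrt S" if "v \<in> t" for v
    proof -
      have "cmod (frob_inner Y v) ^ 2 \<le> S"
        unfolding S_def using that t(2) by (intro member_le_sum_list) auto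
      then show ?thesis
        by (simp add: real_le_rsqrt)
    qed
    have "cmod (frob_inner Y A) \<le> (\<Sum>v\<in>t. cmod (r v) * cmod (frob_inner Y v))"
      unfolding A frob_inner_sum frob_inner_cscale by (rule order_trans[OF norm_sum]) (simp add: norm_mult)
    also have "\<dots> \<le> R * sqrt S"
      unfolding R_def sum_distrib_right by (intro sum_mono mult_left_mono le) auto
    finally have "cmod (frob_inner Y A) ^ 2 \<le> (R * sqrt S) ^ 2"
      by (intro power_mono) auto
    also have "\<dots> = R ^ 2 * S"
      using \<open>S \<ge> 0\<close> by (simp add: power_mult_distrib)
    also have "\<dots> \<le> (R ^ 2 + 1) * S"
      using \<open>S \<ge> 0\<close> by (simp add: mult_right_mono)
    finally show ?thesis
      unfolding S_def .
  qed
  then show ?thesis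
    using that[of "1 / (R ^ 2 + 1)"] by (simp add: add_pos_nonneg field_simps)
qed

lemma choi_form_tau_minus_alpha:
  "choi_form (\<lambda>X. tau Cs X - q *\<^sub>R alpha A X) Y
     = of_real ((\<Sum>C\<leftarrow>Cs. cmod (frob_inner Y C) ^ 2) - q * cmod (frob_inner Y A) ^ 2)"
  by (simp add: choi_form_diff alpha_eq_tau choi_form_tau)

lemma in_span_iff_completely_positive_tau_minus_alpha:
  "A \<in> cmat.span (set Cs) \<longleftrightarrow> (\<exists>q>0. completely_positive (\<lambda>X. tau Cs X - q *\<^sub>R alpha A X))"
proof
  assume "A \<in> cmat.span (set Cs)"
  then obtain q where q: "q > 0" "\<And>Y. q * cmod (frob_inner Y A) ^ 2 \<le> (\<Sum>C\<leftarrow>Cs. cmod (frob_inner Y C) ^ 2)"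
    using frob_inner_dominated_by_coeffs by blast
  have "matrix_unit_expansion (\<lambda>X. tau Cs X - q *\<^sub>R alpha A X)"
    unfolding alpha_eq_tau by (intro matrix_unit_expansion_diff matrix_unit_expansion_tau)
  then obtain Ds where "kraus_decomp (\<lambda>X. tau Cs X - q *\<^sub>R alpha A X) Ds"
    by (rule kraus_decomp_if_choi_form_nonneg) (simp add: choi_form_tau_minus_alpha q(2))
  then have "completely_positive (\<lambda>X. tau Cs X - q *\<^sub>R alpha A X)"
    unfolding kraus_decomp_iff_tau using completely_positive_tau by metis
  with q(1) show "\<exists>q>0. completely_positive (\<lambda>X. tau Cs X - q *\<^sub>R alpha A X)"
    by blast
next
  assume "\<exists>q>0. completely_positive (\<lambda>X. tau Cs X - q *\<^sub>R alpha A X)"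
  then obtain q where "q > 0" and cp: "completely_positive (\<lambda>X. tau Cs X - q *\<^sub>R alpha A X)"
    by blast
  have bound: "q * cmod (frob_inner Y A) ^ 2 \<le> (\<Sum>C\<leftarrow>Cs. cmod (frob_inner Y C) ^ 2)" for Y
    using choi_form_nonneg_if_completely_positive[OF cp, of Y] by (simp add: choi_form_tau_minus_alpha)
  show "A \<in> cmat.span (set Cs)"
    unfolding in_cmat_span_iff_annihilator
  proof (intro allI impI)
    fix Y assume "\<forall>v\<in>set Cs. frob_inner Y v = 0"
    then have "(\<Sum>C\<leftarrow>Cs. cmod (frob_inner Y C) ^ 2) = 0"
      using choi_form_tau_eq_0_iff[of Cs Y] by (simp add: choi_form_tau)
    then have "q * cmod (frob_inner Y A) ^ 2 \<le> 0"
      using bound[of Y] by simp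
    with \<open>q > 0\<close> show "frob_inner Y A = 0"
      by (simp add: mult_le_0_iff)
  qed
qed

section \<open>Convergent positive combinations of Kraus maps\<close>

lemma sums_blinfun_apply_nth:
  fixes f :: "nat \<Rightarrow> ('m::finite) cmat \<Rightarrow> 'm cmat"
  assumes "\<And>n. bounded_linear (f n)" "summable (\<lambda>n. c n *\<^sub>R Blinfun (f n))"
  shows "(\<lambda>n. of_real (c n) * f n X $ b $ d) sums (blinfun_apply (\<Sum>n. c n *\<^sub>R Blinfun (f n)) X $ b $ d)"
proof -
  have "bounded_linear (\<lambda>F :: 'm cmat \<Rightarrow>\<^sub>L 'm cmat. blinfun_apply F X $ b $ d)"
    by (intro bounded_linear_compose[OF bounded_linear_vec_nth]
        bounded_linear_compose[OF bounded_linear_vec_nth] blinfun.bounded_linear_left)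
  from bounded_linear.sums[OF this summable_sums[OF assms(2)]] show ?thesis
    by (simp add: blinfun.scaleR_left bounded_linear_Blinfun_apply[OF assms(1)] scaleR_cmat_nth
        del: vector_scaleR_component)
qed

lemma choi_form_sums:
  assumes "\<And>X b d. (\<lambda>n. of_real (c n) * f n X $ b $ d) sums (\<phi> X $ b $ d)"
  shows "(\<lambda>n. of_real (c n) * choi_form (f n) Y) sums choi_form \<phi> Y"
proof -
  have "(\<lambda>n. \<Sum>p\<in>UNIV. \<Sum>q\<in>UNIV. vec_of_cmat Y p * cnj (vec_of_cmat Y q)
      * (of_real (c n) * choi_matrix (f n) p q)) sums choi_form \<phi> Y"
    unfolding choi_form_def kernel_form_def choi_matrix_def by (intro sums_sum sums_mult assms)
  then show ?thesis
    by (simp add: choi_form_def kernel_form_def sum_distrib_left ac_simps)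
qed

lemma matrix_unit_expansion_sums:
  assumes "\<And>X b d. (\<lambda>n. of_real (c n) * f n X $ b $ d) sums (\<phi> X $ b $ d)"
    and "\<And>n. matrix_unit_expansion (f n)"
  shows "matrix_unit_expansion \<phi>"
  unfolding matrix_unit_expansion_def
proof (intro allI)
  fix X b d
  have "f n X $ b $ d = (\<Sum>a\<in>UNIV. \<Sum>c'\<in>UNIV. X $ a $ c' * f n (matrix_unit a c') $ b $ d)" for n
    using assms(2) unfolding matrix_unit_expansion_def by blast
  then have "(\<lambda>n. of_real (c n) * f n X $ b $ d)
      = (\<lambda>n. \<Sum>a\<in>UNIV. \<Sum>c'\<in>UNIV. X $ a $ c' * (of_real (c n) * f n (matrix_unit a c') $ b $ d))"
    by (simp add: sum_distrib_left ac_simps)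
  also have "\<dots> sums (\<Sum>a\<in>UNIV. \<Sum>c'\<in>UNIV. X $ a $ c' * \<phi> (matrix_unit a c') $ b $ d)"
    by (intro sums_sum sums_mult assms(1))
  finally show "\<phi> X $ b $ d = (\<Sum>a\<in>UNIV. \<Sum>c'\<in>UNIV. X $ a $ c' * \<phi> (matrix_unit a c') $ b $ d)"
    by (rule sums_unique2[OF assms(1)])
qed

lemma choi_form_tau_series:
  fixes L :: "nat \<Rightarrow> ('m::finite) cmat list" and c :: "nat \<Rightarrow> real"
  assumes "summable (\<lambda>n. c n *\<^sub>R Blinfun (tau (L n)))"
    and \<sigma>: "\<sigma> = blinfun_apply (\<Sum>n. c n *\<^sub>R Blinfun (tau (L n)))"
  shows "(\<lambda>n. c n * (\<Sum>C\<leftarrow>L n. cmod (frob_inner Y C) ^ 2)) sums Re (choi_form \<sigma> Y)"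
    and "Im (choi_form \<sigma> Y) = 0"
proof -
  have "(\<lambda>n. of_real (c n * (\<Sum>C\<leftarrow>L n. cmod (frob_inner Y C) ^ 2))) sums choi_form \<sigma> Y"
    using choi_form_sums[where f = "\<lambda>n. tau (L n)" and \<phi> = \<sigma>,
        OF sums_blinfun_apply_nth[OF bounded_linear_tau assms(1), folded \<sigma>]]
    by (simp add: choi_form_tau)
  note form = sums_Re[OF this] sums_Im[OF this]
  show "(\<lambda>n. c n * (\<Sum>C\<leftarrow>L n. cmod (frob_inner Y C) ^ 2)) sums Re (choi_form \<sigma> Y)"
    using form(1) by simp
  have "(\<lambda>n. 0) sums Im (choi_form \<sigma> Y)"
    using form(2) by simp
  then show "Im (choi_form \<sigma> Y) = 0"
    using sums_unique2 sums_zero by blast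
qed

lemma kraus_decomp_tau_series:
  fixes L :: "nat \<Rightarrow> ('m::finite) cmat list" and c :: "nat \<Rightarrow> real"
  assumes pos: "\<And>n. c n > 0" and summable: "summable (\<lambda>n. c n *\<^sub>R Blinfun (tau (L n)))"
    and \<sigma>: "\<sigma> = blinfun_apply (\<Sum>n. c n *\<^sub>R Blinfun (tau (L n)))"
  obtains Cs where "kraus_decomp \<sigma> Cs" "cmat.span (set Cs) = cmat.span (\<Union>n. set (L n))"
proof -
  define r where "r Y n = c n * (\<Sum>C\<leftarrow>L n. cmod (frob_inner Y C) ^ 2)" for Y n
  note form = choi_form_tau_series[OF summable \<sigma>, folded r_def]
  have r_nonneg: "r Y n \<ge> 0" for Y n
    unfolding r_def using pos[of n] by (intro mult_nonneg_nonneg sum_list_nonneg) auto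
  have "matrix_unit_expansion \<sigma>"
    using matrix_unit_expansion_sums[where f = "\<lambda>n. tau (L n)" and \<phi> = \<sigma>,
        OF sums_blinfun_apply_nth[OF bounded_linear_tau summable, folded \<sigma>] matrix_unit_expansion_tau] .
  moreover have "Im (choi_form \<sigma> Y) = 0 \<and> Re (choi_form \<sigma> Y) \<ge> 0" for Y
    using form(2) sums_le[OF r_nonneg sums_zero form(1)] by simp
  ultimately obtain Cs where Cs: "kraus_decomp \<sigma> Cs"
    by (rule kraus_decomp_if_choi_form_nonneg)
  have "choi_form \<sigma> Y = 0 \<longleftrightarrow> Re (choi_form \<sigma> Y) = 0" for Y
    using form(2)[of Y] by (simp add: complex_eq_iff)
  also have "Re (choi_form \<sigma> Y) = 0 \<longleftrightarrow> (\<forall>n. r Y n = 0)" for Y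
    unfolding sums_unique[OF form(1)[of Y]] by (rule suminf_eq_zero_iff[OF sums_summable[OF form(1)] r_nonneg])
  also have "(\<forall>n. r Y n = 0) \<longleftrightarrow> (\<forall>C\<in>\<Union>n. set (L n). frob_inner Y C = 0)" for Y
  proof -
    have "r Y n = 0 \<longleftrightarrow> (\<forall>C\<in>set (L n). frob_inner Y C = 0)" for n
      using pos[of n] choi_form_tau_eq_0_iff[of "L n" Y] by (simp add: r_def choi_form_tau)
    then show ?thesis
      by blast
  qed
  finally have "cmat.span (set Cs) = cmat.span (\<Union>n. set (L n))"
    by (rule kraus_coeff_span_eq[OF Cs])
  with Cs show ?thesis
    by (rule that)
qed

lemma coeff_space_tau_series:
  fixes L :: "nat \<Rightarrow> ('m::finite) cmat list" and c :: "nat \<Rightarrow> real"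
  assumes "\<And>n. c n > 0" "summable (\<lambda>n. c n *\<^sub>R Blinfun (tau (L n)))"
    and "\<sigma> = blinfun_apply (\<Sum>n. c n *\<^sub>R Blinfun (tau (L n)))"
  shows "coeff_space \<sigma> = cmat.span (\<Union>n. set (L n))"
    and "A \<in> coeff_space \<sigma> \<longleftrightarrow> (\<exists>q>0. completely_positive (\<lambda>X. \<sigma> X - q *\<^sub>R alpha A X))"
proof -
  obtain Cs where Cs: "kraus_decomp \<sigma> Cs" and span: "cmat.span (set Cs) = cmat.span (\<Union>n. set (L n))"
    using kraus_decomp_tau_series[OF assms] .
  show "coeff_space \<sigma> = cmat.span (\<Union>n. set (L n))"
    using coeff_space_eq_span[OF Cs] span by simp
  have "\<sigma> = tau Cs"
    using Cs by (simp add: kraus_decomp_iff_tau)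
  then show "A \<in> coeff_space \<sigma> \<longleftrightarrow> (\<exists>q>0. completely_positive (\<lambda>X. \<sigma> X - q *\<^sub>R alpha A X))"
    unfolding coeff_space_eq_span[OF Cs] using in_span_iff_completely_positive_tau_minus_alpha by simp
qed

theorem theorem5p1:
  fixes As :: "('m::finite) cmat list" and a :: "nat \<Rightarrow> real"
  assumes "As \<noteq> []"
    and "\<forall>n. a n > 0"
    and "summable (\<lambda>n. a n *\<^sub>R Blinfun (tau As ^^ n))"
  defines "\<sigma>0 \<equiv> blinfun_apply (\<Sum>n. a n *\<^sub>R Blinfun (tau As ^^ n))"
    and "\<sigma>1 \<equiv> blinfun_apply (\<Sum>n. a (Suc n) *\<^sub>R Blinfun (tau As ^^ Suc n))"
  shows "coeff_space \<sigma>0 = gen_ualg (set As) \<and> coeff_space \<sigma>1 = gen_alg (set As)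
    \<and> vector_space.dim cscale (gen_ualg (set As)) = choi_rank \<sigma>0
    \<and> vector_space.dim cscale (gen_alg (set As)) = choi_rank \<sigma>1
    \<and> (\<forall>A. A \<in> gen_ualg (set As) \<longleftrightarrow>
          (\<exists>q>0. completely_positive (\<lambda>X. \<sigma>0 X - q *\<^sub>R alpha A X)))
    \<and> (\<forall>A. A \<in> gen_alg (set As) \<longleftrightarrow>
          (\<exists>q>0. completely_positive (\<lambda>X. \<sigma>1 X - q *\<^sub>R alpha A X)))"
proof -
  have pos: "\<And>n. a n > 0" "\<And>n. a (Suc n) > 0"
    using assms(2) by blast+
  have summable0: "summable (\<lambda>n. a n *\<^sub>R Blinfun (tau (monomials As n)))"
    using assms(3) by (simp only: funpow_tau)
  then have summable1: "summable (\<lambda>n. a (Suc n) *\<^sub>R Blinfun (tau (monomials As (Suc n))))"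
    by (subst summable_Suc_iff)
  have "\<sigma>0 = blinfun_apply (\<Sum>n. a n *\<^sub>R Blinfun (tau (monomials As n)))"
       "\<sigma>1 = blinfun_apply (\<Sum>n. a (Suc n) *\<^sub>R Blinfun (tau (monomials As (Suc n))))"
    unfolding \<sigma>0_def \<sigma>1_def by (simp_all only: funpow_tau)
  note S0 = coeff_space_tau_series[OF pos(1) summable0 this(1), folded gen_ualg_eq_span_monomials]
    and S1 = coeff_space_tau_series[OF pos(2) summable1 this(2), folded gen_alg_eq_span_monomials]
  show ?thesis
    unfolding choi_rank_def using S0 S1 by simp
qed

end
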